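(* Let $M$ be a closed topological disc, immersed in $\mathbb{R}^3$ as a capillary surface with support surface $S$ and with real-analytic boundary. Let $\gamma$ denote the boundary curve of $M$. Then $M$ is totally umbilic if and only if $\gamma$ has constant geodesic torsion in the support surface $S$. In this case, the geodesic torsion of $\gamma$ in $S$ is zero.
   Context: A capillary surface is an immersed surface $M$ of constant mean curvature whose boundary curve $\gamma$ lies in another surface $S$ (the support surface), such that $M$ and $S$ intersect with constant contact angle along $\gamma$ (the angle between the unit normals of $M$ and $S$ is constant along $\gamma$). Here $M$ is the image of the closed unit disc under a conformal constant mean curvature immersion defined on an open neighbourhood of the closed disc, with regular boundary curve. Totally umbilic means every point is umbilic (part of a round sphere or a plane). For a surface $\Sigma$ containing $\gamma$ with unit normal $N$ along $\gamma$, $\gamma$ parametrized by arc length and $Y=N\times\gamma'$, the geodesic torsion of $\gamma$ in $\Sigma$ is $\tau_g=\langle Y',N\rangle$. *)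

theory Defs
  imports "HOL-Analysis.Analysis"
begin

text \<open>Parameter domains are subsets of the complex plane (identified with R^2, u + i v).
  Directional derivative of f at z in direction v.\<close>
definition pd :: "complex \<Rightarrow> (complex \<Rightarrow> 'a::real_normed_vector) \<Rightarrow> complex \<Rightarrow> 'a" where
  "pd v f z = frechet_derivative f (at z) v"

fun iter_pd :: "complex list \<Rightarrow> (complex \<Rightarrow> 'a::real_normed_vector) \<Rightarrow> complex \<Rightarrow> 'a" where
  "iter_pd [] f = f"
| "iter_pd (v # vs) f = pd v (iter_pd vs f)"

definition cinf_on :: "complex set \<Rightarrow> (complex \<Rightarrow> 'a::real_normed_vector) \<Rightarrow> bool" where
  "cinf_on U f \<longleftrightarrow> (\<forall>vs. \<forall>z\<in>U. iter_pd vs f differentiable (at z))"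

definition immersion_on :: "complex set \<Rightarrow> (complex \<Rightarrow> real^3) \<Rightarrow> bool" where
  "immersion_on U X \<longleftrightarrow> open U \<and> cinf_on U X \<and>
     (\<forall>z\<in>U. cross3 (pd 1 X z) (pd \<i> X z) \<noteq> 0)"

definition conformal_immersion_on :: "complex set \<Rightarrow> (complex \<Rightarrow> real^3) \<Rightarrow> bool" where
  "conformal_immersion_on U X \<longleftrightarrow> immersion_on U X \<and>
     (\<forall>z\<in>U. inner (pd 1 X z) (pd 1 X z) = inner (pd \<i> X z) (pd \<i> X z) \<and>
            inner (pd 1 X z) (pd \<i> X z) = 0)"

definition unit_normal :: "(complex \<Rightarrow> real^3) \<Rightarrow> complex \<Rightarrow> real^3" where
  "unit_normal X z = (let n = cross3 (pd 1 X z) (pd \<i> X z) in (1 / norm n) *\<^sub>R n)"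

definition fE :: "(complex \<Rightarrow> real^3) \<Rightarrow> complex \<Rightarrow> real" where
  "fE X z = inner (pd 1 X z) (pd 1 X z)"
definition fF :: "(complex \<Rightarrow> real^3) \<Rightarrow> complex \<Rightarrow> real" where
  "fF X z = inner (pd 1 X z) (pd \<i> X z)"
definition fG :: "(complex \<Rightarrow> real^3) \<Rightarrow> complex \<Rightarrow> real" where
  "fG X z = inner (pd \<i> X z) (pd \<i> X z)"
definition sL :: "(complex \<Rightarrow> real^3) \<Rightarrow> complex \<Rightarrow> real" where
  "sL X z = inner (pd 1 (pd 1 X) z) (unit_normal X z)"
definition sM :: "(complex \<Rightarrow> real^3) \<Rightarrow> complex \<Rightarrow> real" where
  "sM X z = inner (pd \<i> (pd 1 X) z) (unit_normal X z)"
definition sN :: "(complex \<Rightarrow> real^3) \<Rightarrow> complex \<Rightarrow> real" where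
  "sN X z = inner (pd \<i> (pd \<i> X) z) (unit_normal X z)"

definition mean_curv :: "(complex \<Rightarrow> real^3) \<Rightarrow> complex \<Rightarrow> real" where
  "mean_curv X z = (fE X z * sN X z - 2 * fF X z * sM X z + fG X z * sL X z)
                   / (2 * (fE X z * fG X z - (fF X z)\<^sup>2))"

definition umbilic :: "(complex \<Rightarrow> real^3) \<Rightarrow> complex \<Rightarrow> bool" where
  "umbilic X z \<longleftrightarrow> (\<exists>k. sL X z = k * fE X z \<and> sM X z = k * fF X z \<and> sN X z = k * fG X z)"

definition real_analytic_on :: "real set \<Rightarrow> (real \<Rightarrow> 'a::real_normed_vector) \<Rightarrow> bool" where
  "real_analytic_on A f \<longleftrightarrow>
     (\<forall>t0\<in>A. \<exists>r>0. \<exists>a::nat \<Rightarrow> 'a. \<forall>t. \<bar>t - t0\<bar> < r \<longrightarrow> (\<lambda>n. (t - t0) ^ n *\<^sub>R a n) sums f t)"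

text \<open>Geodesic torsion of the curve g (arbitrary regular parametrisation) in a surface with
  unit normal N(t) along g: with s arc length, T = dg/ds, Y = N x T, tau_g = <dY/ds, N>.\<close>
definition geodesic_torsion :: "(real \<Rightarrow> real^3) \<Rightarrow> (real \<Rightarrow> real^3) \<Rightarrow> real \<Rightarrow> real" where
  "geodesic_torsion g N t =
     inner (vector_derivative
              (\<lambda>s. cross3 (N s) ((1 / norm (vector_derivative g (at s))) *\<^sub>R vector_derivative g (at s)))
              (at t))
           (N t) / norm (vector_derivative g (at t))"

end

theory Submission
  imports Defs "HOL-Complex_Analysis.Complex_Analysis"
begin

text \<open>In conformal coordinates the Codazzi equations of a surface of constant mean curvature
  are the Cauchy--Riemann equations of \<open>Q = (L - N) - 2 i M\<close>, so \<open>Q\<close> is holomorphic, and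
  it vanishes exactly at the umbilics. Along the boundary circle \<open>z = cis t\<close> the constant
  contact angle makes the normal of \<open>S\<close> a constant rotation of the normal of \<open>M\<close> about the
  tangent, so both give the same geodesic torsion, namely \<open>Im (z\<^sup>2 Q) / (2 E)\<close>. If this is a
  constant \<open>\<tau>\<close>, the holomorphic function \<open>z\<^sup>2 Q\<close> vanishes at \<open>0\<close> and has imaginary part
  \<open>2 E \<tau>\<close> on the circle; the maximum principle forces \<open>\<tau> = 0\<close>, then \<open>Im (z\<^sup>2 Q) = 0\<close> on the
  disc, so \<open>z\<^sup>2 Q\<close> is constant, hence zero, and \<open>M\<close> is totally umbilic.\<close>

section \<open>Directional derivatives\<close>

lemma has_derivative_pd: "f differentiable (at z) \<Longrightarrow> (f has_derivative (\<lambda>h. pd h f z)) (at z)"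
  unfolding pd_def by (simp add: frechet_derivative_works[symmetric])

lemma pd_eqI: "(f has_derivative f') (at z) \<Longrightarrow> pd h f z = f' h"
  unfolding pd_def by (metis frechet_derivative_at)

lemma linear_pd: "f differentiable (at z) \<Longrightarrow> linear (\<lambda>h. pd h f z)"
  using has_derivative_pd has_derivative_linear by blast

lemma pd_Re_Im:
  assumes "f differentiable (at z)"
  shows "pd w f z = Re w *\<^sub>R pd 1 f z + Im w *\<^sub>R pd \<i> f z"
proof -
  have l: "linear (\<lambda>h. pd h f z)" by (rule linear_pd[OF assms])
  have "w = Re w *\<^sub>R 1 + Im w *\<^sub>R \<i>" by (simp add: complex_eq_iff)
  then have "pd w f z = pd (Re w *\<^sub>R 1 + Im w *\<^sub>R \<i>) f z" by simp
  also have "\<dots> = Re w *\<^sub>R pd 1 f z + Im w *\<^sub>R pd \<i> f z"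
    using linear_add[OF l] linear_scale[OF l] by simp
  finally show ?thesis .
qed

lemma pd_cong_open:
  assumes "open U" "z \<in> U" "\<And>x. x \<in> U \<Longrightarrow> f x = g x"
  shows "pd h f z = pd h g z"
proof -
  have "(f has_derivative D) (at z) \<longleftrightarrow> (g has_derivative D) (at z)" for D
    using assms by (metis has_derivative_transform_within_open)
  then show ?thesis unfolding pd_def frechet_derivative_def by simp
qed

lemma differentiable_cong_open:
  assumes "open U" "z \<in> U" "\<And>x. x \<in> U \<Longrightarrow> f x = g x" "f differentiable (at z)"
  shows "g differentiable (at z)"
  using assms unfolding differentiable_def by (metis has_derivative_transform_within_open)

lemma pd_inner:
  assumes "f differentiable (at z)" "g differentiable (at z)"
  shows "pd h (\<lambda>x. inner (f x) (g x)) z = inner (pd h f z) (g z) + inner (f z) (pd h g z)"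
  by (rule pd_eqI) (auto intro!: derivative_eq_intros has_derivative_pd assms)

lemma pd_add:
  assumes "f differentiable (at z)" "g differentiable (at z)"
  shows "pd h (\<lambda>x. f x + g x) z = pd h f z + pd h g z"
  by (rule pd_eqI) (auto intro!: derivative_eq_intros has_derivative_pd assms)

lemma pd_const_mult:
  fixes f :: "complex \<Rightarrow> real"
  assumes "f differentiable (at z)"
  shows "pd h (\<lambda>x. c * f x) z = c * pd h f z"
  by (rule pd_eqI) (auto intro!: derivative_eq_intros has_derivative_pd assms)

lemma pd_inner_eq_0_if_inner_constant_on:
  assumes "open U" "z \<in> U" "\<And>w. w \<in> U \<Longrightarrow> inner (f w) (g w) = c"
    and "f differentiable (at z)" "g differentiable (at z)"
  shows "inner (pd h f z) (g z) + inner (f z) (pd h g z) = 0"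
proof -
  have "pd h (\<lambda>w. inner (f w) (g w)) z = pd h (\<lambda>_. c) z"
    by (rule pd_cong_open[OF assms(1-3)])
  also have "\<dots> = 0" by (rule pd_eqI) (rule has_derivative_const)
  finally show ?thesis using pd_inner[OF assms(4,5)] by simp
qed

lemma pd_vec_nth:
  fixes f :: "complex \<Rightarrow> real^'n"
  assumes "f differentiable (at z)"
  shows "pd h (\<lambda>w. f w $ k) z = pd h f z $ k"
  by (rule pd_eqI) (rule bounded_linear.has_derivative[OF bounded_linear_vec_nth has_derivative_pd[OF assms]])

lemma differentiable_vec_nth:
  fixes f :: "complex \<Rightarrow> real^'n"
  shows "f differentiable (at z) \<Longrightarrow> (\<lambda>w. f w $ k) differentiable (at z)"
  unfolding differentiable_def by (metis bounded_linear.has_derivative[OF bounded_linear_vec_nth])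

lemma has_vector_derivative_pd_comp:
  assumes c: "(c has_vector_derivative c') (at t)" and F: "F differentiable (at (c t))"
  shows "((\<lambda>s. F (c s)) has_vector_derivative pd c' F (c t)) (at t)"
proof -
  have "((\<lambda>s. F (c s)) has_derivative (\<lambda>x. pd (x *\<^sub>R c') F (c t))) (at t)"
    using has_derivative_compose[OF c[unfolded has_vector_derivative_def] has_derivative_pd[OF F]] .
  then show ?thesis
    unfolding has_vector_derivative_def by (simp add: linear_scale[OF linear_pd[OF F]])
qed

lemma has_real_derivative_pd_line:
  fixes g :: "complex \<Rightarrow> real"
  assumes "g differentiable (at (w + of_real s * d))"
  shows "((\<lambda>s. g (w + of_real s * d)) has_real_derivative pd d g (w + of_real s * d)) (at s)"
proof -
  have "((\<lambda>s. w + of_real s * d) has_vector_derivative d) (at s)"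
    by (auto intro!: derivative_eq_intros simp: has_vector_derivative_def scaleR_conv_of_real)
  from has_vector_derivative_pd_comp[OF this assms] show ?thesis
    by (simp add: has_real_derivative_iff_has_vector_derivative)
qed

section \<open>Smoothness and symmetry of second derivatives\<close>

lemma iter_pd_append: "iter_pd (vs @ [v]) f = iter_pd vs (pd v f)"
  by (induction vs) auto

lemma cinf_on_pd: "cinf_on U f \<Longrightarrow> cinf_on U (pd v f)"
  unfolding cinf_on_def by (metis iter_pd_append)

lemma cinf_on_differentiable: "cinf_on U f \<Longrightarrow> z \<in> U \<Longrightarrow> f differentiable (at z)"
  unfolding cinf_on_def by (metis iter_pd.simps(1))

lemma iter_pd_vec_nth:
  fixes f :: "complex \<Rightarrow> real^'n"
  assumes "open U" "cinf_on U f" "w \<in> U"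
  shows "iter_pd vs (\<lambda>w. f w $ k) w = iter_pd vs f w $ k"
  using assms(3)
proof (induction vs arbitrary: w)
  case (Cons v vs)
  have "pd v (iter_pd vs (\<lambda>w. f w $ k)) w = pd v (\<lambda>w. iter_pd vs f w $ k) w"
    by (rule pd_cong_open[OF assms(1) Cons.prems Cons.IH])
  also have "\<dots> = pd v (iter_pd vs f) w $ k"
    using assms(2) Cons.prems by (intro pd_vec_nth) (simp add: cinf_on_def)
  finally show ?case by simp
qed simp

lemma cinf_on_vec_nth:
  fixes f :: "complex \<Rightarrow> real^'n"
  assumes "open U" "cinf_on U f"
  shows "cinf_on U (\<lambda>w. f w $ k)"
  unfolding cinf_on_def
proof (intro allI ballI)
  fix vs w assume "w \<in> U"
  show "iter_pd vs (\<lambda>w. f w $ k) differentiable (at w)"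
    by (rule differentiable_cong_open[OF assms(1) \<open>w \<in> U\<close>, of "\<lambda>w. iter_pd vs f w $ k"])
       (use assms \<open>w \<in> U\<close> in \<open>auto simp: iter_pd_vec_nth cinf_on_def intro: differentiable_vec_nth\<close>)
qed

lemma second_difference_mvt:
  fixes g :: "complex \<Rightarrow> real" and z a b :: complex
  defines "P \<equiv> \<lambda>s t. z + of_real s * a + of_real t * b"
  assumes h: "h > 0"
    and PU: "\<And>s t. 0 \<le> s \<Longrightarrow> s \<le> h \<Longrightarrow> 0 \<le> t \<Longrightarrow> t \<le> h \<Longrightarrow> P s t \<in> U"
    and dg: "\<And>w. w \<in> U \<Longrightarrow> g differentiable (at w)"
    and dga: "\<And>w. w \<in> U \<Longrightarrow> pd a g differentiable (at w)"
  obtains s t where "0 < s" "s < h" "0 < t" "t < h"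
    "g (P h h) - g (P h 0) - g (P 0 h) + g (P 0 0) = h\<^sup>2 * pd b (pd a g) (P s t)"
proof -
  have along_a: "((\<lambda>s. f (P s t)) has_real_derivative pd a f (P s t)) (at s)"
    if "f differentiable (at (P s t))" for f :: "complex \<Rightarrow> real" and s t
    using has_real_derivative_pd_line[of f "z + of_real t * b" s a] that
    by (simp add: P_def algebra_simps)
  have along_b: "((\<lambda>t. f (P s t)) has_real_derivative pd b f (P s t)) (at t)"
    if "f differentiable (at (P s t))" for f :: "complex \<Rightarrow> real" and s t
    using has_real_derivative_pd_line[of f "z + of_real s * a" t b] that
    by (simp add: P_def)
  have "\<exists>s. 0 < s \<and> s < h \<and> (g (P h h) - g (P h 0)) - (g (P 0 h) - g (P 0 0))
          = (h - 0) * (pd a g (P s h) - pd a g (P s 0))"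
    by (rule MVT2[OF h]) (use PU h in \<open>auto intro!: DERIV_diff along_a dg\<close>)
  then obtain s where s: "0 < s" "s < h"
    "(g (P h h) - g (P h 0)) - (g (P 0 h) - g (P 0 0)) = h * (pd a g (P s h) - pd a g (P s 0))"
    by auto
  have "\<exists>t. 0 < t \<and> t < h \<and> pd a g (P s h) - pd a g (P s 0) = (h - 0) * pd b (pd a g) (P s t)"
    by (rule MVT2[OF h]) (use PU h s in \<open>auto intro!: along_b dga\<close>)
  then obtain t where t: "0 < t" "t < h" "pd a g (P s h) - pd a g (P s 0) = h * pd b (pd a g) (P s t)"
    by auto
  show ?thesis
    by (rule that[OF s(1,2) t(1,2)]) (use s(3) t(3) in \<open>simp add: power2_eq_square\<close>)
qed

text \<open>Two second differences over the same square, taken in either order, give the mixed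
  partial derivatives in either order at two points of the square.\<close>

lemma mixed_pd_eq_at_nearby_points:
  fixes g :: "complex \<Rightarrow> real"
  assumes r: "r > 0" "ball z r \<subseteq> U" and g: "cinf_on U g"
  obtains w1 w2 where "w1 \<in> ball z r" "w2 \<in> ball z r" "pd b (pd a g) w1 = pd a (pd b g) w2"
proof -
  define h where "h = r / (norm a + norm b + 1)"
  have h: "h > 0" using r by (simp add: h_def add_nonneg_pos)
  have near: "z + of_real s * c + of_real t * d \<in> ball z r"
    if "0 \<le> s" "s \<le> h" "0 \<le> t" "t \<le> h" "(c, d) \<in> {(a, b), (b, a)}" for s t c d
  proof -
    have "dist (z + of_real s * c + of_real t * d) z \<le> s * norm c + t * norm d"
      using norm_triangle_ineq[of "of_real s * c" "of_real t * d"] that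
      by (simp add: dist_norm norm_mult)
    also have "\<dots> \<le> h * norm c + h * norm d"
      using that by (intro add_mono mult_right_mono) auto
    also have "\<dots> = h * (norm a + norm b)"
      using that(5) by (auto simp: algebra_simps)
    also have "\<dots> < r"
      using r by (simp add: h_def divide_less_eq add_pos_nonneg algebra_simps)
    finally show ?thesis by (simp add: dist_commute)
  qed
  have dU: "\<And>w. w \<in> U \<Longrightarrow> f differentiable (at w)" if "f \<in> {g, pd a g, pd b g}" for f
    using that g by (auto intro: cinf_on_differentiable cinf_on_pd)
  have PU: "z + of_real s * c + of_real t * d \<in> U"
    if "0 \<le> s" "s \<le> h" "0 \<le> t" "t \<le> h" "(c, d) \<in> {(a, b), (b, a)}" for s t c d
    using near[OF that] r(2) by blast
  obtain s1 t1 where st1: "0 < s1" "s1 < h" "0 < t1" "t1 < h"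
    "g (z + of_real h * a + of_real h * b) - g (z + of_real h * a) - g (z + of_real h * b) + g z
     = h\<^sup>2 * pd b (pd a g) (z + of_real s1 * a + of_real t1 * b)"
    by (rule second_difference_mvt[OF h, of z a b U g]) (use PU dU in auto)
  obtain s2 t2 where st2: "0 < s2" "s2 < h" "0 < t2" "t2 < h"
    "g (z + of_real h * b + of_real h * a) - g (z + of_real h * b) - g (z + of_real h * a) + g z
     = h\<^sup>2 * pd a (pd b g) (z + of_real s2 * b + of_real t2 * a)"
    by (rule second_difference_mvt[OF h, of z b a U g]) (use PU dU in auto)
  have swap: "z + of_real h * b + of_real h * a = z + of_real h * a + of_real h * b"
    by (simp add: algebra_simps)
  have "h\<^sup>2 * pd b (pd a g) (z + of_real s1 * a + of_real t1 * b)
      = h\<^sup>2 * pd a (pd b g) (z + of_real s2 * b + of_real t2 * a)"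
    using st1(5) st2(5)[unfolded swap] by linarith
  then show ?thesis
    using h near[of s1 t1 a b] near[of s2 t2 b a] st1 st2 by (intro that) auto
qed

lemma pd_commute_real:
  fixes g :: "complex \<Rightarrow> real"
  assumes U: "open U" "z \<in> U" and g: "cinf_on U g"
  shows "pd b (pd a g) z = pd a (pd b g) z"
proof -
  define A B where "A = pd b (pd a g) z" and "B = pd a (pd b g) z"
  have bound: "\<bar>A - B\<bar> \<le> 2 * e" if e: "e > 0" for e
  proof -
    have "isCont (pd b (pd a g)) z" "isCont (pd a (pd b g)) z"
      using g U by (auto intro!: differentiable_imp_continuous_within cinf_on_differentiable cinf_on_pd)
    then obtain r1 r2 where r1: "r1 > 0" "\<And>w. dist w z < r1 \<Longrightarrow> dist (pd b (pd a g) w) A < e"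
      and r2: "r2 > 0" "\<And>w. dist w z < r2 \<Longrightarrow> dist (pd a (pd b g) w) B < e"
      using e unfolding continuous_at_eps_delta A_def B_def by metis
    obtain r3 where r3: "r3 > 0" "ball z r3 \<subseteq> U" using U openE by blast
    have "min r1 (min r2 r3) > 0" "ball z (min r1 (min r2 r3)) \<subseteq> U"
      using r1(1) r2(1) r3 by auto
    then obtain w1 w2 where w: "w1 \<in> ball z (min r1 (min r2 r3))" "w2 \<in> ball z (min r1 (min r2 r3))"
      "pd b (pd a g) w1 = pd a (pd b g) w2"
      using mixed_pd_eq_at_nearby_points g by metis
    have "dist (pd b (pd a g) w1) A < e" using w(1) by (intro r1(2)) (simp add: dist_commute)
    moreover have "dist (pd a (pd b g) w2) B < e" using w(2) by (intro r2(2)) (simp add: dist_commute)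
    ultimately show ?thesis using w(3) unfolding dist_real_def by linarith
  qed
  have "\<bar>A - B\<bar> \<le> 0"
  proof (rule field_le_epsilon)
    fix e :: real assume "e > 0"
    then show "\<bar>A - B\<bar> \<le> 0 + e" using bound[of "e / 2"] by simp
  qed
  then show ?thesis by (simp add: A_def B_def)
qed

lemma pd_commute:
  fixes f :: "complex \<Rightarrow> real^'n"
  assumes "open U" "z \<in> U" "cinf_on U f"
  shows "pd b (pd a f) z = pd a (pd b f) z"
proof (subst vec_eq_iff, intro allI)
  fix k
  have "pd b (pd a f) z $ k = iter_pd [b, a] (\<lambda>w. f w $ k) z"
    using iter_pd_vec_nth[OF assms(1,3,2), of "[b, a]"] by simp
  also have "\<dots> = iter_pd [a, b] (\<lambda>w. f w $ k) z"
    using pd_commute_real[OF assms(1,2) cinf_on_vec_nth[OF assms(1,3)]] by simp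
  also have "\<dots> = pd a (pd b f) z $ k"
    using iter_pd_vec_nth[OF assms(1,3,2), of "[a, b]"] by simp
  finally show "pd b (pd a f) z $ k = pd a (pd b f) z $ k" .
qed

section \<open>Frames in Euclidean three-space\<close>

lemma orthogonal_frame_expansion:
  fixes a b v :: "real^3"
  assumes "inner a b = 0"
  shows "(inner a a * inner b b) *\<^sub>R v
         = (inner b b * inner v a) *\<^sub>R a + (inner a a * inner v b) *\<^sub>R b
           + inner v (cross3 a b) *\<^sub>R cross3 a b"
proof -
  have "a$1*b$1 + a$2*b$2 + a$3*b$3 = 0" using assms by (simp add: inner_vec_def sum_3)
  then have "(inner a a * inner b b) * inner v w = inner b b * inner v a * inner a w
      + inner a a * inner v b * inner b w + inner v (cross3 a b) * inner (cross3 a b) w" for w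
    unfolding cross3_def inner_vec_def sum_3 by (simp add: vector_def) algebra
  note parseval = this
  show ?thesis
  proof (rule vector_eq_rdot[THEN iffD1], rule allI)
    fix w :: "real^3"
    show "inner ((inner a a * inner b b) *\<^sub>R v) w
        = inner ((inner b b * inner v a) *\<^sub>R a + (inner a a * inner v b) *\<^sub>R b
           + inner v (cross3 a b) *\<^sub>R cross3 a b) w"
      unfolding inner_add_left inner_scaleR_left parseval[of w] by (simp only: mult.assoc)
  qed
qed

lemma orthonormal_expansion_perp:
  fixes a b v :: "real^3"
  assumes "inner a a = 1" "inner b b = 1" "inner a b = 0" "inner v b = 0"
  shows "v = inner v a *\<^sub>R a + inner v (cross3 a b) *\<^sub>R cross3 a b"
  using orthogonal_frame_expansion[OF assms(3), of v] assms by simp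

lemma unit_cross3_unit:
  fixes a b :: "real^3"
  assumes "inner a a = 1" "inner b b = 1" "inner a b = 0"
  shows "inner (cross3 a b) (cross3 a b) = 1"
  using norm_cross_dot[of a b] assms by (simp add: power2_norm_eq_inner power_mult_distrib)

lemma cross3_cross3_left: "cross3 (cross3 a b) c = inner a c *\<^sub>R b - inner b c *\<^sub>R a"
  by (simp add: cross3_simps inner_vec_def sum_3 vec_eq_iff forall_3)

lemma norm_cross3_le: "norm (cross3 x y) \<le> norm x * norm y"
proof -
  have "(norm (cross3 x y))\<^sup>2 \<le> (norm x * norm y)\<^sup>2"
    using norm_cross_dot[of x y] by (metis le_add_same_cancel1 zero_le_power2)
  then show ?thesis by (rule power2_le_imp_le) simp
qed

lemma differentiable_cross3:
  fixes f g :: "'a::real_normed_vector \<Rightarrow> real^3"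
  assumes "f differentiable (at z)" "g differentiable (at z)"
  shows "(\<lambda>w. cross3 (f w) (g w)) differentiable (at z)"
proof -
  have "bounded_bilinear (cross3 :: real^3 \<Rightarrow> real^3 \<Rightarrow> real^3)"
    using bilinear_conv_bounded_bilinear bilinear_cross by blast
  then show ?thesis using assms unfolding differentiable_def by (blast intro: bounded_bilinear.FDERIV)
qed

lemma differentiable_normalize:
  fixes n :: "'a::real_normed_vector \<Rightarrow> real^3"
  assumes "n differentiable (at z)" "n z \<noteq> 0"
  shows "(\<lambda>w. (1 / norm (n w)) *\<^sub>R n w) differentiable (at z)"
proof -
  have "(\<lambda>w. norm (n w)) differentiable (at z)"
    using differentiable_compose[of norm n z] assms differentiable_norm_at[OF assms(2)] by (simp add: o_def)
  then show ?thesis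
    using assms by (intro differentiable_scaleR differentiable_divide) auto
qed

section \<open>Immersions and conformal immersions\<close>

lemma immersion_onD:
  assumes "immersion_on U X" "z \<in> U"
  shows "open U" "cinf_on U X" "cross3 (pd 1 X z) (pd \<i> X z) \<noteq> 0"
  using assms by (auto simp: immersion_on_def)

lemma unit_normal_eq:
  "unit_normal X z = (1 / norm (cross3 (pd 1 X z) (pd \<i> X z))) *\<^sub>R cross3 (pd 1 X z) (pd \<i> X z)"
  by (simp add: unit_normal_def Let_def)

lemma differentiable_unit_normal:
  assumes "immersion_on U X" "z \<in> U"
  shows "unit_normal X differentiable (at z)"
proof -
  have "(\<lambda>w. cross3 (pd 1 X w) (pd \<i> X w)) differentiable (at z)"
    using immersion_onD[OF assms] assms(2)
    by (intro differentiable_cross3 cinf_on_differentiable[OF cinf_on_pd])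
  from differentiable_normalize[OF this immersion_onD(3)[OF assms]] show ?thesis
    by (simp add: unit_normal_eq[abs_def])
qed

lemma unit_normal_unit:
  assumes "immersion_on U X" "z \<in> U"
  shows "inner (unit_normal X z) (unit_normal X z) = 1"
  using immersion_onD(3)[OF assms] by (simp add: unit_normal_eq dot_square_norm)

lemma unit_normal_orthogonal_pd:
  assumes "immersion_on U X" "z \<in> U"
  shows "inner (unit_normal X z) (pd w X z) = 0"
  using pd_Re_Im[OF cinf_on_differentiable[OF immersion_onD(2)[OF assms] assms(2)], of w]
  by (simp add: unit_normal_eq inner_add_right dot_cross_self inner_commute)

lemma inner_pd_unit_normal:
  assumes "immersion_on U X" "z \<in> U"
  shows "inner (pd d (unit_normal X) z) (pd a X z) = - inner (pd d (pd a X) z) (unit_normal X z)"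
    and "inner (pd d (unit_normal X) z) (unit_normal X z) = 0"
proof -
  note X = immersion_onD[OF assms]
  have dN: "unit_normal X differentiable (at z)" by (rule differentiable_unit_normal[OF assms])
  have "inner (pd d (unit_normal X) z) (pd a X z) + inner (unit_normal X z) (pd d (pd a X) z) = 0"
    using X assms(2) unit_normal_orthogonal_pd[OF assms(1)]
    by (intro pd_inner_eq_0_if_inner_constant_on[where U = U] dN cinf_on_differentiable[OF cinf_on_pd])
  then show "inner (pd d (unit_normal X) z) (pd a X z) = - inner (pd d (pd a X) z) (unit_normal X z)"
    by (simp add: inner_commute)
  have "inner (pd d (unit_normal X) z) (unit_normal X z) + inner (unit_normal X z) (pd d (unit_normal X) z) = 0"
    using X assms(2) unit_normal_unit[OF assms(1)] by (intro pd_inner_eq_0_if_inner_constant_on[where U = U] dN)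
  then show "inner (pd d (unit_normal X) z) (unit_normal X z) = 0"
    by (simp add: inner_commute)
qed

lemma weingarten_equations:
  assumes "immersion_on U X" "z \<in> U"
  shows "inner (pd 1 (unit_normal X) z) (pd 1 X z) = - sL X z"
    "inner (pd \<i> (unit_normal X) z) (pd 1 X z) = - sM X z"
    "inner (pd 1 (unit_normal X) z) (pd \<i> X z) = - sM X z"
    "inner (pd \<i> (unit_normal X) z) (pd \<i> X z) = - sN X z"
  using inner_pd_unit_normal(1)[OF assms] pd_commute[OF immersion_onD(1)[OF assms] assms(2) immersion_onD(2)[OF assms], of \<i> 1]
  by (simp_all add: sL_def sM_def sN_def)

lemma conformal_immersion_onD:
  assumes "conformal_immersion_on U X" "z \<in> U"
  shows "immersion_on U X" "inner (pd 1 X z) (pd \<i> X z) = 0"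
    "inner (pd \<i> X z) (pd \<i> X z) = inner (pd 1 X z) (pd 1 X z)"
  using assms by (auto simp: conformal_immersion_on_def)

lemma conformal_first_fundamental_form:
  assumes "conformal_immersion_on U X" "z \<in> U"
  shows "fF X z = 0" "fG X z = fE X z" "fE X z > 0"
proof -
  have "pd 1 X z \<noteq> 0"
    using immersion_onD(3)[OF conformal_immersion_onD(1)[OF assms] assms(2)] by auto
  then show "fF X z = 0" "fG X z = fE X z" "fE X z > 0"
    using conformal_immersion_onD[OF assms] by (auto simp: fE_def fF_def fG_def)
qed

lemma conformal_cross3_eq:
  assumes "conformal_immersion_on U X" "z \<in> U"
  shows "cross3 (pd 1 X z) (pd \<i> X z) = fE X z *\<^sub>R unit_normal X z"
proof -
  have "(norm (cross3 (pd 1 X z) (pd \<i> X z)))\<^sup>2 = (norm (pd 1 X z))\<^sup>2 * (norm (pd \<i> X z))\<^sup>2"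
    using norm_cross_dot[of "pd 1 X z" "pd \<i> X z"] conformal_immersion_onD(2)[OF assms]
    by (simp add: power_mult_distrib)
  also have "\<dots> = (fE X z)\<^sup>2"
    using conformal_immersion_onD(3)[OF assms] unfolding power2_norm_eq_inner fE_def
    by (simp add: power2_eq_square)
  finally have "(norm (cross3 (pd 1 X z) (pd \<i> X z)))\<^sup>2 = (fE X z)\<^sup>2" .
  then have "norm (cross3 (pd 1 X z) (pd \<i> X z)) = fE X z"
    using conformal_first_fundamental_form(3)[OF assms] by (simp add: power2_eq_iff_nonneg)
  then show ?thesis
    using conformal_first_fundamental_form(3)[OF assms] by (simp add: unit_normal_eq)
qed

lemma conformal_normal_cross3:
  assumes "conformal_immersion_on U X" "z \<in> U"
  shows "cross3 (unit_normal X z) (pd 1 X z) = pd \<i> X z"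
    and "cross3 (unit_normal X z) (pd \<i> X z) = - pd 1 X z"
proof -
  have E: "fE X z > 0" by (rule conformal_first_fundamental_form(3)[OF assms])
  have N: "unit_normal X z = (1 / fE X z) *\<^sub>R cross3 (pd 1 X z) (pd \<i> X z)"
    using conformal_cross3_eq[OF assms] E by simp
  show "cross3 (unit_normal X z) (pd 1 X z) = pd \<i> X z"
    "cross3 (unit_normal X z) (pd \<i> X z) = - pd 1 X z"
    using conformal_immersion_onD(2,3)[OF assms] E
    by (simp_all add: N cross_mult_left cross3_cross3_left fE_def inner_commute)
qed

lemma conformal_frame_expansion:
  assumes "conformal_immersion_on U X" "z \<in> U"
  shows "fE X z *\<^sub>R v = inner v (pd 1 X z) *\<^sub>R pd 1 X z + inner v (pd \<i> X z) *\<^sub>R pd \<i> X z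
           + (fE X z * inner v (unit_normal X z)) *\<^sub>R unit_normal X z"
proof -
  have E: "fE X z > 0" by (rule conformal_first_fundamental_form(3)[OF assms])
  have "fE X z *\<^sub>R (fE X z *\<^sub>R v) = fE X z *\<^sub>R (inner v (pd 1 X z) *\<^sub>R pd 1 X z
      + inner v (pd \<i> X z) *\<^sub>R pd \<i> X z + (fE X z * inner v (unit_normal X z)) *\<^sub>R unit_normal X z)"
    using orthogonal_frame_expansion[OF conformal_immersion_onD(2)[OF assms], of v]
      conformal_immersion_onD(3)[OF assms]
    by (simp add: conformal_cross3_eq[OF assms] fE_def scaleR_add_right algebra_simps)
  then show ?thesis using E by (metis scaleR_cancel_left less_irrefl)
qed

lemma conformal_weingarten:
  assumes "conformal_immersion_on U X" "z \<in> U"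
  shows "fE X z *\<^sub>R pd 1 (unit_normal X) z = - (sL X z *\<^sub>R pd 1 X z + sM X z *\<^sub>R pd \<i> X z)"
    and "fE X z *\<^sub>R pd \<i> (unit_normal X) z = - (sM X z *\<^sub>R pd 1 X z + sN X z *\<^sub>R pd \<i> X z)"
  using conformal_frame_expansion[OF assms, of "pd 1 (unit_normal X) z"]
    conformal_frame_expansion[OF assms, of "pd \<i> (unit_normal X) z"]
    weingarten_equations[OF conformal_immersion_onD(1)[OF assms] assms(2)]
    inner_pd_unit_normal(2)[OF conformal_immersion_onD(1)[OF assms] assms(2)]
  by simp_all

lemma conformal_second_derivatives:
  assumes "conformal_immersion_on U X" "z \<in> U"
  shows "2 * inner (pd 1 (pd 1 X) z) (pd 1 X z) = pd 1 (fE X) z"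
    and "2 * inner (pd \<i> (pd 1 X) z) (pd 1 X z) = pd \<i> (fE X) z"
    and "2 * inner (pd \<i> (pd 1 X) z) (pd \<i> X z) = pd 1 (fE X) z"
    and "2 * inner (pd \<i> (pd \<i> X) z) (pd \<i> X z) = pd \<i> (fE X) z"
    and "2 * inner (pd 1 (pd 1 X) z) (pd \<i> X z) = - pd \<i> (fE X) z"
    and "2 * inner (pd \<i> (pd \<i> X) z) (pd 1 X z) = - pd 1 (fE X) z"
proof -
  note X = immersion_onD[OF conformal_immersion_onD(1)[OF assms] assms(2)]
  have d: "pd a X differentiable (at w)" if "w \<in> U" for a w
    using X that by (intro cinf_on_differentiable[OF cinf_on_pd])
  have E_u: "pd d (fE X) z = 2 * inner (pd d (pd 1 X) z) (pd 1 X z)" for d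
    using pd_inner[OF d[OF assms(2)] d[OF assms(2)], of d] by (simp add: fE_def[abs_def] inner_commute)
  have E_v: "pd d (fE X) z = 2 * inner (pd d (pd \<i> X) z) (pd \<i> X z)" for d
  proof -
    have "pd d (fE X) z = pd d (\<lambda>w. inner (pd \<i> X w) (pd \<i> X w)) z"
      by (intro pd_cong_open[OF X(1) assms(2)]) (simp add: fE_def conformal_immersion_onD(3)[OF assms(1)])
    then show ?thesis using pd_inner[OF d[OF assms(2)] d[OF assms(2)], of d] by (simp add: inner_commute)
  qed
  have F: "inner (pd d (pd 1 X) z) (pd \<i> X z) + inner (pd 1 X z) (pd d (pd \<i> X) z) = 0" for d
    using conformal_immersion_onD(2)[OF assms(1)]
    by (intro pd_inner_eq_0_if_inner_constant_on[OF X(1) assms(2)] d[OF assms(2)])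
  have sym: "pd \<i> (pd 1 X) z = pd 1 (pd \<i> X) z"
    by (rule pd_commute[OF X(1) assms(2) X(2)])
  show "2 * inner (pd 1 (pd 1 X) z) (pd 1 X z) = pd 1 (fE X) z"
    "2 * inner (pd \<i> (pd 1 X) z) (pd 1 X z) = pd \<i> (fE X) z"
    "2 * inner (pd \<i> (pd 1 X) z) (pd \<i> X z) = pd 1 (fE X) z"
    "2 * inner (pd \<i> (pd \<i> X) z) (pd \<i> X z) = pd \<i> (fE X) z"
    using E_u E_v sym by simp_all
  show "2 * inner (pd 1 (pd 1 X) z) (pd \<i> X z) = - pd \<i> (fE X) z"
    using F[of 1] E_u[of \<i>] sym by (simp add: inner_commute)
  show "2 * inner (pd \<i> (pd \<i> X) z) (pd 1 X z) = - pd 1 (fE X) z"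
    using F[of \<i>] E_v[of 1] sym by (simp add: inner_commute)
qed

text \<open>The third-order derivatives of \<open>X\<close> cancel by symmetry of mixed partials.\<close>

lemma codazzi_reduction:
  assumes "immersion_on U X" "z \<in> U"
  shows "pd \<i> (sL X) z - pd 1 (sM X) z
           = inner (pd 1 (pd 1 X) z) (pd \<i> (unit_normal X) z) - inner (pd \<i> (pd 1 X) z) (pd 1 (unit_normal X) z)"
    and "pd \<i> (sM X) z - pd 1 (sN X) z
           = inner (pd \<i> (pd 1 X) z) (pd \<i> (unit_normal X) z) - inner (pd \<i> (pd \<i> X) z) (pd 1 (unit_normal X) z)"
proof -
  note X = immersion_onD[OF assms]
  have dN: "unit_normal X differentiable (at z)" by (rule differentiable_unit_normal[OF assms])
  have d: "pd a (pd b X) differentiable (at z)" for a b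
    using X assms(2) by (intro cinf_on_differentiable[OF cinf_on_pd[OF cinf_on_pd]])
  have pdII: "pd d (\<lambda>w. inner (pd a (pd b X) w) (unit_normal X w)) z
      = inner (pd d (pd a (pd b X)) z) (unit_normal X z) + inner (pd a (pd b X) z) (pd d (unit_normal X) z)"
    for a b d by (rule pd_inner[OF d dN])
  have sym1: "pd \<i> (pd 1 (pd 1 X)) z = pd 1 (pd \<i> (pd 1 X)) z"
    by (rule pd_commute[OF X(1) assms(2) cinf_on_pd[OF X(2)]])
  have "pd \<i> (pd \<i> (pd 1 X)) z = pd \<i> (pd 1 (pd \<i> X)) z"
    by (intro pd_cong_open[OF X(1) assms(2)] pd_commute[OF X(1) _ X(2)])
  also have "\<dots> = pd 1 (pd \<i> (pd \<i> X)) z"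
    by (rule pd_commute[OF X(1) assms(2) cinf_on_pd[OF X(2)]])
  finally have sym2: "pd \<i> (pd \<i> (pd 1 X)) z = pd 1 (pd \<i> (pd \<i> X)) z" .
  show "pd \<i> (sL X) z - pd 1 (sM X) z
      = inner (pd 1 (pd 1 X) z) (pd \<i> (unit_normal X) z) - inner (pd \<i> (pd 1 X) z) (pd 1 (unit_normal X) z)"
    using pdII[where a = 1 and b = 1 and d = \<i>] pdII[where a = \<i> and b = 1 and d = 1] sym1 by (simp add: sL_def[abs_def] sM_def[abs_def])
  show "pd \<i> (sM X) z - pd 1 (sN X) z
      = inner (pd \<i> (pd 1 X) z) (pd \<i> (unit_normal X) z) - inner (pd \<i> (pd \<i> X) z) (pd 1 (unit_normal X) z)"
    using pdII[where a = \<i> and b = 1 and d = \<i>] pdII[where a = \<i> and b = \<i> and d = 1] sym2 by (simp add: sM_def[abs_def] sN_def[abs_def])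
qed

lemma conformal_codazzi:
  assumes "conformal_immersion_on U X" "z \<in> U"
  shows "fE X z * (pd \<i> (sL X) z - pd 1 (sM X) z) = pd \<i> (fE X) z * (sL X z + sN X z) / 2"
    and "fE X z * (pd \<i> (sM X) z - pd 1 (sN X) z) = - pd 1 (fE X) z * (sL X z + sN X z) / 2"
proof -
  note imm = conformal_immersion_onD(1)[OF assms]
  note W = conformal_weingarten[OF assms] and D = conformal_second_derivatives[OF assms]
  have "fE X z * (pd \<i> (sL X) z - pd 1 (sM X) z)
      = inner (pd 1 (pd 1 X) z) (fE X z *\<^sub>R pd \<i> (unit_normal X) z)
        - inner (pd \<i> (pd 1 X) z) (fE X z *\<^sub>R pd 1 (unit_normal X) z)"
    by (simp add: codazzi_reduction(1)[OF imm assms(2)] algebra_simps)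
  also have "\<dots> = pd \<i> (fE X) z * (sL X z + sN X z) / 2"
    unfolding W using D by (simp add: inner_add_right inner_minus_right algebra_simps)
  finally show "fE X z * (pd \<i> (sL X) z - pd 1 (sM X) z) = pd \<i> (fE X) z * (sL X z + sN X z) / 2" .
  have "fE X z * (pd \<i> (sM X) z - pd 1 (sN X) z)
      = inner (pd \<i> (pd 1 X) z) (fE X z *\<^sub>R pd \<i> (unit_normal X) z)
        - inner (pd \<i> (pd \<i> X) z) (fE X z *\<^sub>R pd 1 (unit_normal X) z)"
    by (simp add: codazzi_reduction(2)[OF imm assms(2)] algebra_simps)
  also have "\<dots> = - pd 1 (fE X) z * (sL X z + sN X z) / 2"
    unfolding W using D by (simp add: inner_add_right inner_minus_right algebra_simps)
  finally show "fE X z * (pd \<i> (sM X) z - pd 1 (sN X) z) = - pd 1 (fE X) z * (sL X z + sN X z) / 2" .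
qed

lemma conformal_mean_curv:
  assumes "conformal_immersion_on U X" "z \<in> U"
  shows "sL X z + sN X z = 2 * mean_curv X z * fE X z"
  using conformal_first_fundamental_form[OF assms]
  by (simp add: mean_curv_def power2_eq_square field_simps)

lemma differentiable_fundamental_forms:
  assumes "immersion_on U X" "z \<in> U"
  shows "fE X differentiable (at z)" "sL X differentiable (at z)"
    "sM X differentiable (at z)" "sN X differentiable (at z)"
proof -
  note X = immersion_onD[OF assms]
  have dN: "unit_normal X differentiable (at z)" by (rule differentiable_unit_normal[OF assms])
  have d1: "pd a X differentiable (at z)" for a
    by (rule cinf_on_differentiable[OF cinf_on_pd[OF X(2)] assms(2)])
  have d2: "pd a (pd b X) differentiable (at z)" for a b
    by (rule cinf_on_differentiable[OF cinf_on_pd[OF cinf_on_pd[OF X(2)]] assms(2)])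
  have "(\<lambda>w. inner (pd 1 X w) (pd 1 X w)) differentiable (at z)"
    by (rule differentiable_inner[OF d1 d1])
  then show "fE X differentiable (at z)" by (simp add: fE_def[abs_def])
  have "(\<lambda>w. inner (pd a (pd b X) w) (unit_normal X w)) differentiable (at z)" for a b
    by (rule differentiable_inner[OF d2 dN])
  then show "sL X differentiable (at z)" "sM X differentiable (at z)" "sN X differentiable (at z)"
    by (simp_all add: sL_def[abs_def] sM_def[abs_def] sN_def[abs_def])
qed

section \<open>The Hopf differential\<close>

definition hopf :: "(complex \<Rightarrow> real^3) \<Rightarrow> complex \<Rightarrow> complex" where
  "hopf X z = Complex (sL X z - sN X z) (-2 * sM X z)"

lemma hopf_eq_0_iff_umbilic:
  assumes "conformal_immersion_on U X" "z \<in> U"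
  shows "hopf X z = 0 \<longleftrightarrow> umbilic X z"
proof
  assume "hopf X z = 0"
  then have "sL X z = sN X z" "sM X z = 0" by (auto simp: hopf_def complex_eq_iff)
  then show "umbilic X z"
    using conformal_first_fundamental_form[OF assms] unfolding umbilic_def
    by (intro exI[of _ "sL X z / fE X z"]) auto
next
  assume "umbilic X z"
  then show "hopf X z = 0"
    using conformal_first_fundamental_form(1,2)[OF assms]
    by (auto simp: umbilic_def hopf_def complex_eq_iff)
qed

lemma hopf_cauchy_riemann:
  assumes "conformal_immersion_on U X" "\<forall>w\<in>U. mean_curv X w = H" "z \<in> U"
  shows "pd \<i> (sL X) z - pd \<i> (sN X) z = 2 * pd 1 (sM X) z"
    and "pd 1 (sL X) z - pd 1 (sN X) z = -2 * pd \<i> (sM X) z"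
proof -
  note X = immersion_onD[OF conformal_immersion_onD(1)[OF assms(1,3)] assms(3)]
  have E: "fE X z > 0" by (rule conformal_first_fundamental_form(3)[OF assms(1,3)])
  have mean: "sL X w + sN X w = 2 * H * fE X w" if "w \<in> U" for w
    using conformal_mean_curv[OF assms(1) that] assms(2) that by simp
  note d = differentiable_fundamental_forms[OF conformal_immersion_onD(1)[OF assms(1,3)] assms(3)]
  have pd_mean: "pd d (sL X) z + pd d (sN X) z = 2 * H * pd d (fE X) z" for d
  proof -
    have "pd d (\<lambda>w. sL X w + sN X w) z = pd d (\<lambda>w. 2 * H * fE X w) z"
      by (rule pd_cong_open[OF X(1) assms(3) mean])
    then show ?thesis using pd_add[OF d(2,4)] pd_const_mult[OF d(1)] by simp
  qed
  have "fE X z * (pd \<i> (sL X) z - pd 1 (sM X) z) = fE X z * (H * pd \<i> (fE X) z)"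
    using conformal_codazzi(1)[OF assms(1,3)] mean[OF assms(3)] by (simp add: ac_simps)
  then have "pd \<i> (sL X) z - pd 1 (sM X) z = H * pd \<i> (fE X) z"
    using E by simp
  then show "pd \<i> (sL X) z - pd \<i> (sN X) z = 2 * pd 1 (sM X) z"
    using pd_mean[of \<i>] by simp
  have "fE X z * (pd \<i> (sM X) z - pd 1 (sN X) z) = fE X z * (- (H * pd 1 (fE X) z))"
    using conformal_codazzi(2)[OF assms(1,3)] mean[OF assms(3)] by (simp add: ac_simps)
  then have "pd \<i> (sM X) z - pd 1 (sN X) z = - (H * pd 1 (fE X) z)"
    using E by (metis mult_cancel_left less_irrefl)
  then show "pd 1 (sL X) z - pd 1 (sN X) z = -2 * pd \<i> (sM X) z"
    using pd_mean[of 1] by simp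
qed

lemma has_field_derivative_if_cauchy_riemann:
  fixes f :: "complex \<Rightarrow> complex"
  assumes f: "(f has_derivative D) (at z)" and CR: "D \<i> = \<i> * D 1"
  shows "(f has_field_derivative D 1) (at z)"
proof -
  have l: "linear D" using has_derivative_linear[OF f] .
  define c where "c = D 1"
  have "D h = c * h" for h
  proof -
    have h: "h = Re h *\<^sub>R 1 + Im h *\<^sub>R \<i>" by (simp add: complex_eq_iff)
    have "D h = Re h *\<^sub>R D 1 + Im h *\<^sub>R D \<i>"
      by (subst h) (simp add: linear_add[OF l] linear_scale[OF l])
    also have "\<dots> = (of_real (Re h) + \<i> * of_real (Im h)) * c"
      using CR by (simp add: c_def scaleR_conv_of_real distrib_right)
    also have "of_real (Re h) + \<i> * of_real (Im h) = h" by (simp add: complex_eq_iff)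
    finally show ?thesis by (simp add: mult.commute)
  qed
  then have "D = (*) c" by (simp add: fun_eq_iff)
  then show ?thesis using f unfolding has_field_derivative_def c_def by simp
qed

text \<open>For constant mean curvature the Codazzi equations are the Cauchy--Riemann equations of \<open>Q\<close>.\<close>

lemma hopf_holomorphic:
  assumes conf: "conformal_immersion_on U X" and H: "\<forall>w\<in>U. mean_curv X w = H"
  shows "hopf X holomorphic_on U"
proof -
  have "hopf X field_differentiable (at z)" if z: "z \<in> U" for z
  proof -
    note d = differentiable_fundamental_forms[OF conformal_immersion_onD(1)[OF conf z] z]
    have "hopf X = (\<lambda>w. of_real (sL X w - sN X w) + \<i> * of_real (-2 * sM X w))"
      by (simp add: fun_eq_iff hopf_def complex_eq_iff)
    moreover have "((\<lambda>w. of_real (sL X w - sN X w) + \<i> * of_real (-2 * sM X w)) has_derivative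
        (\<lambda>h. of_real (pd h (sL X) z - pd h (sN X) z) + \<i> * of_real (-2 * pd h (sM X) z))) (at z)"
      by (intro has_derivative_add has_derivative_mult_right has_derivative_of_real has_derivative_diff
          has_derivative_pd d)
    ultimately have "(hopf X has_derivative
        (\<lambda>h. of_real (pd h (sL X) z - pd h (sN X) z) + \<i> * of_real (-2 * pd h (sM X) z))) (at z)"
      by simp
    from has_field_derivative_if_cauchy_riemann[OF this] show ?thesis
      using hopf_cauchy_riemann[OF conf H z] unfolding field_differentiable_def
      by (auto simp: complex_eq_iff)
  qed
  then show ?thesis unfolding holomorphic_on_def using field_differentiable_at_within by blast
qed

lemma inner_cross_unit_normal_pd_eq_hopf:
  assumes "conformal_immersion_on U X" "z \<in> U"
  shows "2 * inner (cross3 (unit_normal X z) (pd w X z)) (pd w (unit_normal X) z) = Im (w\<^sup>2 * hopf X z)"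
proof -
  note imm = conformal_immersion_onD(1)[OF assms]
  have dX: "X differentiable (at z)"
    by (rule cinf_on_differentiable[OF immersion_onD(2)[OF imm assms(2)] assms(2)])
  have cr: "cross3 (unit_normal X z) (pd w X z) = Re w *\<^sub>R pd \<i> X z - Im w *\<^sub>R pd 1 X z"
    unfolding pd_Re_Im[OF dX, of w]
    by (simp add: cross_add_right cross_mult_right conformal_normal_cross3[OF assms])
  have Nw: "pd w (unit_normal X) z = Re w *\<^sub>R pd 1 (unit_normal X) z + Im w *\<^sub>R pd \<i> (unit_normal X) z"
    by (rule pd_Re_Im[OF differentiable_unit_normal[OF imm assms(2)]])
  have "inner (cross3 (unit_normal X z) (pd w X z)) (pd w (unit_normal X) z)
      = ((Im w)\<^sup>2 - (Re w)\<^sup>2) * sM X z + Re w * Im w * (sL X z - sN X z)"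
    unfolding cr Nw using weingarten_equations[OF imm assms(2)]
    by (simp add: inner_add_left inner_add_right inner_diff_left inner_commute power2_eq_square algebra_simps)
  moreover have "Im (w\<^sup>2 * hopf X z) = 2 * (((Im w)\<^sup>2 - (Re w)\<^sup>2) * sM X z + Re w * Im w * (sL X z - sN X z))"
    by (simp add: hopf_def power2_eq_square algebra_simps)
  ultimately show ?thesis by simp
qed

section \<open>Geodesic torsion of the boundary curve\<close>

definition unit_tangent :: "(real \<Rightarrow> real^3) \<Rightarrow> real \<Rightarrow> real^3" where
  "unit_tangent g s = (1 / norm (vector_derivative g (at s))) *\<^sub>R vector_derivative g (at s)"

lemma inner_has_vector_derivative_eq_0_if_inner_constant:
  fixes f g :: "real \<Rightarrow> 'a::real_inner"
  assumes "(f has_vector_derivative f') (at t)" "(g has_vector_derivative g') (at t)"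
    and "\<And>s. inner (f s) (g s) = k"
  shows "inner f' (g t) + inner (f t) g' = 0"
proof -
  have "((\<lambda>s. inner (f s) (g s)) has_derivative (\<lambda>h. inner (f t) (h *\<^sub>R g') + inner (h *\<^sub>R f') (g t))) (at t)"
    using has_derivative_inner[OF assms(1,2)[unfolded has_vector_derivative_def]] .
  moreover have "((\<lambda>s. inner (f s) (g s)) has_derivative (\<lambda>h. 0)) (at t)"
    using assms(3) by simp
  ultimately have "(\<lambda>h. inner (f t) (h *\<^sub>R g') + inner (h *\<^sub>R f') (g t)) = (\<lambda>h. 0)"
    by (rule has_derivative_unique)
  then have "inner (f t) (1 *\<^sub>R g') + inner (1 *\<^sub>R f') (g t) = 0" by meson
  then show ?thesis by (simp add: inner_commute)
qed

lemma geodesic_torsion_rotated_normal: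
  fixes \<gamma> n :: "real \<Rightarrow> real^3"
  defines "\<nu> \<equiv> \<lambda>s. cross3 (n s) (unit_tangent \<gamma> s)"
  assumes n_unit: "\<And>s. inner (n s) (n s) = 1"
    and n_perp: "\<And>s. inner (n s) (vector_derivative \<gamma> (at s)) = 0"
    and regular: "\<And>s. vector_derivative \<gamma> (at s) \<noteq> 0"
    and n': "(n has_vector_derivative n') (at t)" and \<nu>_diff: "\<nu> differentiable (at t)"
    and cs: "c\<^sup>2 + \<sigma>\<^sup>2 = 1"
  shows "geodesic_torsion \<gamma> (\<lambda>s. c *\<^sub>R n s + \<sigma> *\<^sub>R \<nu> s) t
           = - inner (\<nu> t) n' / norm (vector_derivative \<gamma> (at t))"
proof -
  define T where "T = unit_tangent \<gamma>"
  have T_unit: "inner (T s) (T s) = 1" for s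
    using regular by (simp add: T_def unit_tangent_def dot_square_norm)
  have nT: "inner (n s) (T s) = 0" for s
    using n_perp by (simp add: T_def unit_tangent_def)
  have \<nu>_unit: "inner (\<nu> s) (\<nu> s) = 1" for s
    unfolding \<nu>_def T_def[symmetric] by (rule unit_cross3_unit[OF n_unit T_unit nT])
  have \<nu>n: "inner (\<nu> s) (n s) = 0" for s
    by (simp add: \<nu>_def dot_cross_self inner_commute)
  have cross: "cross3 (c *\<^sub>R n s + \<sigma> *\<^sub>R \<nu> s) (T s) = c *\<^sub>R \<nu> s - \<sigma> *\<^sub>R n s" for s
    using nT[of s] T_unit[of s]
    by (simp add: \<nu>_def T_def[symmetric] cross_add_left cross_mult_left cross3_cross3_left)
  obtain \<nu>' where \<nu>': "(\<nu> has_vector_derivative \<nu>') (at t)"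
    using \<nu>_diff differentiable_def has_vector_derivative_def
    by (metis vector_derivative_works)
  have "((\<lambda>s. c *\<^sub>R \<nu> s - \<sigma> *\<^sub>R n s) has_vector_derivative c *\<^sub>R \<nu>' - \<sigma> *\<^sub>R n') (at t)"
    by (intro has_vector_derivative_diff bounded_linear.has_vector_derivative[OF bounded_linear_scaleR_right]
        \<nu>' n')
  then have "geodesic_torsion \<gamma> (\<lambda>s. c *\<^sub>R n s + \<sigma> *\<^sub>R \<nu> s) t
      = inner (c *\<^sub>R \<nu>' - \<sigma> *\<^sub>R n') (c *\<^sub>R n t + \<sigma> *\<^sub>R \<nu> t) / norm (vector_derivative \<gamma> (at t))"
    unfolding geodesic_torsion_def unit_tangent_def[symmetric] T_def[symmetric] cross
    by (simp add: vector_derivative_at)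
  moreover have "inner (c *\<^sub>R \<nu>' - \<sigma> *\<^sub>R n') (c *\<^sub>R n t + \<sigma> *\<^sub>R \<nu> t) = - inner (\<nu> t) n'"
  proof -
    have "inner \<nu>' (n t) = - inner (\<nu> t) n'"
      using inner_has_vector_derivative_eq_0_if_inner_constant[OF \<nu>' n' \<nu>n] by simp
    moreover have "inner \<nu>' (\<nu> t) = 0"
      using inner_has_vector_derivative_eq_0_if_inner_constant[OF \<nu>' \<nu>' \<nu>_unit] by (simp add: inner_commute)
    moreover have "inner n' (n t) = 0"
      using inner_has_vector_derivative_eq_0_if_inner_constant[OF n' n' n_unit] by (simp add: inner_commute)
    ultimately have "inner (c *\<^sub>R \<nu>' - \<sigma> *\<^sub>R n') (c *\<^sub>R n t + \<sigma> *\<^sub>R \<nu> t) = - ((c\<^sup>2 + \<sigma>\<^sup>2) * inner (\<nu> t) n')"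
      by (simp add: inner_diff_left inner_add_right inner_commute power2_eq_square algebra_simps)
    then show ?thesis using cs by simp
  qed
  ultimately show ?thesis by simp
qed

lemma conformal_inner_pd:
  assumes "conformal_immersion_on U X" "z \<in> U"
  shows "inner (pd w X z) (pd w X z) = (cmod w)\<^sup>2 * fE X z"
proof -
  have "X differentiable (at z)"
    using immersion_onD(2)[OF conformal_immersion_onD(1)[OF assms] assms(2)] assms(2)
    by (rule cinf_on_differentiable)
  then have "inner (pd w X z) (pd w X z) = ((Re w)\<^sup>2 + (Im w)\<^sup>2) * fE X z"
    using conformal_immersion_onD(2,3)[OF assms]
    by (simp add: pd_Re_Im[of X z w] fE_def inner_add_left inner_add_right inner_commute
        power2_eq_square algebra_simps)
  then show ?thesis by (simp add: cmod_power2)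
qed

lemma has_vector_derivative_circle:
  assumes "F differentiable (at (cis t))"
  shows "((\<lambda>s. F (cis s)) has_vector_derivative pd (\<i> * cis t) F (cis t)) (at t)"
proof -
  have "(cis has_vector_derivative \<i> * cis t) (at t)"
    using has_derivative_cis[OF has_derivative_ident[of "at t"]]
    by (simp add: has_vector_derivative_def)
  from has_vector_derivative_pd_comp[OF this assms] show ?thesis .
qed

lemma conformal_boundary_velocity:
  assumes conf: "conformal_immersion_on U X" and circ: "\<And>s. cis s \<in> U"
  shows "((\<lambda>s. X (cis s)) has_vector_derivative pd (\<i> * cis t) X (cis t)) (at t)"
    and "(norm (pd (\<i> * cis t) X (cis t)))\<^sup>2 = fE X (cis t)"
    and "pd (\<i> * cis t) X (cis t) \<noteq> 0"
proof -
  note X = immersion_onD[OF conformal_immersion_onD(1)[OF conf circ] circ]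
  show "((\<lambda>s. X (cis s)) has_vector_derivative pd (\<i> * cis t) X (cis t)) (at t)"
    by (rule has_vector_derivative_circle[OF cinf_on_differentiable[OF X(2) circ]])
  show norm: "(norm (pd (\<i> * cis t) X (cis t)))\<^sup>2 = fE X (cis t)"
    using conformal_inner_pd[OF conf circ, of "\<i> * cis t" t] by (simp add: dot_square_norm norm_mult)
  show "pd (\<i> * cis t) X (cis t) \<noteq> 0"
    using norm conformal_first_fundamental_form(3)[OF conf circ, of t] by auto
qed

lemma conformal_boundary_frame:
  assumes conf: "conformal_immersion_on U X" and circ: "\<And>s. cis s \<in> U"
  defines "\<gamma> \<equiv> \<lambda>s. X (cis s)"
  shows "unit_tangent \<gamma> t = (1 / norm (pd (\<i> * cis t) X (cis t))) *\<^sub>R pd (\<i> * cis t) X (cis t)"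
    and "inner (unit_tangent \<gamma> t) (unit_tangent \<gamma> t) = 1"
    and "inner (unit_normal X (cis t)) (unit_tangent \<gamma> t) = 0"
    and "(\<lambda>s. cross3 (unit_normal X (cis s)) (unit_tangent \<gamma> s)) differentiable (at t)"
proof -
  note imm = conformal_immersion_onD(1)[OF conf circ]
  note X = immersion_onD[OF imm circ]
  define Tg where "Tg s = pd (\<i> * cis s) X (cis s)" for s
  have T: "unit_tangent \<gamma> s = (1 / norm (Tg s)) *\<^sub>R Tg s" for s
    unfolding unit_tangent_def \<gamma>_def Tg_def
    by (simp add: vector_derivative_at[OF conformal_boundary_velocity(1)[OF conf circ]])
  then show "unit_tangent \<gamma> t = (1 / norm (pd (\<i> * cis t) X (cis t))) *\<^sub>R pd (\<i> * cis t) X (cis t)"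
    by (simp add: Tg_def)
  show "inner (unit_tangent \<gamma> t) (unit_tangent \<gamma> t) = 1"
    using conformal_boundary_velocity(3)[OF conf circ] by (simp add: T Tg_def dot_square_norm)
  show "inner (unit_normal X (cis t)) (unit_tangent \<gamma> t) = 0"
    using unit_normal_orthogonal_pd[OF imm circ] by (simp add: T Tg_def)
  have "Tg s = (- sin s) *\<^sub>R pd 1 X (cis s) + cos s *\<^sub>R pd \<i> X (cis s)" for s
    using pd_Re_Im[OF cinf_on_differentiable[OF X(2) circ], of "\<i> * cis s"] by (simp add: Tg_def)
  then have Tg_eq: "Tg = (\<lambda>s. (- sin s) *\<^sub>R pd 1 X (cis s) + cos s *\<^sub>R pd \<i> X (cis s))" by auto
  have "(\<lambda>s. pd a X (cis s)) differentiable (at t)" for a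
    using has_vector_derivative_circle[OF cinf_on_differentiable[OF cinf_on_pd[OF X(2)] circ]]
    by (rule differentiableI_vector)
  moreover have "(\<lambda>s. - sin s) differentiable (at t)" "(\<lambda>s. cos s) differentiable (at t)"
    by (auto intro!: derivative_eq_intros simp: differentiable_def)
  ultimately have "Tg differentiable (at t)"
    unfolding Tg_eq by (intro differentiable_add differentiable_scaleR)
  then have "(\<lambda>s. (1 / norm (Tg s)) *\<^sub>R Tg s) differentiable (at t)"
    by (rule differentiable_normalize) (use conformal_boundary_velocity(3)[OF conf circ] in \<open>simp add: Tg_def\<close>)
  then have "unit_tangent \<gamma> differentiable (at t)"
    by (simp add: T[abs_def])
  moreover have "(\<lambda>s. unit_normal X (cis s)) differentiable (at t)"
    by (rule differentiableI_vector[OF has_vector_derivative_circle[OF differentiable_unit_normal[OF imm circ]]])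
  ultimately show "(\<lambda>s. cross3 (unit_normal X (cis s)) (unit_tangent \<gamma> s)) differentiable (at t)"
    by (intro differentiable_cross3)
qed

lemma geodesic_torsion_boundary_circle:
  assumes conf: "conformal_immersion_on U X" and circ: "\<And>s. cis s \<in> U" and cs: "c\<^sup>2 + \<sigma>\<^sup>2 = 1"
  defines "\<gamma> \<equiv> \<lambda>s. X (cis s)" and "n \<equiv> \<lambda>s. unit_normal X (cis s)"
  shows "geodesic_torsion \<gamma> (\<lambda>s. c *\<^sub>R n s + \<sigma> *\<^sub>R cross3 (n s) (unit_tangent \<gamma> s)) t
           = Im ((cis t)\<^sup>2 * hopf X (cis t)) / (2 * fE X (cis t))"
proof -
  note imm = conformal_immersion_onD(1)[OF conf circ]
  note V = conformal_boundary_velocity[OF conf circ]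
  define Tg where "Tg = pd (\<i> * cis t) X (cis t)"
  define n' where "n' = pd (\<i> * cis t) (unit_normal X) (cis t)"
  have n': "(n has_vector_derivative n') (at t)"
    unfolding n_def n'_def by (rule has_vector_derivative_circle[OF differentiable_unit_normal[OF imm circ]])
  have "geodesic_torsion \<gamma> (\<lambda>s. c *\<^sub>R n s + \<sigma> *\<^sub>R cross3 (n s) (unit_tangent \<gamma> s)) t
      = - inner (cross3 (n t) (unit_tangent \<gamma> t)) n' / norm Tg"
    using geodesic_torsion_rotated_normal[OF _ _ _ n' _ cs, of \<gamma>] unit_normal_unit[OF imm circ]
      unit_normal_orthogonal_pd[OF imm circ] V(3) conformal_boundary_frame(4)[OF conf circ]
    by (simp add: vector_derivative_at[OF V(1)] \<gamma>_def n_def Tg_def)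
  also have "\<dots> = - inner (cross3 (n t) Tg) n' / (norm Tg)\<^sup>2"
    by (simp add: conformal_boundary_frame(1)[OF conf circ] \<gamma>_def Tg_def cross_mult_right power2_eq_square)
  also have "2 * inner (cross3 (n t) Tg) n' = - Im ((cis t)\<^sup>2 * hopf X (cis t))"
    using inner_cross_unit_normal_pd_eq_hopf[OF conf circ[of t], of "\<i> * cis t"]
    by (simp add: n_def Tg_def n'_def power_mult_distrib)
  then have "- inner (cross3 (n t) Tg) n' = Im ((cis t)\<^sup>2 * hopf X (cis t)) / 2" by simp
  finally show ?thesis by (simp add: V(2) Tg_def)
qed

section \<open>The normal of the support surface along the boundary\<close>

lemma immersion_pd_lower_bound:
  assumes "immersion_on V Y" "p \<in> V"
  obtains m where "m > 0" "\<And>h. m * norm h \<le> norm (pd h Y p)"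
proof -
  define Yu Yv c where "Yu = pd 1 Y p" and "Yv = pd \<i> Y p" and "c = cross3 Yu Yv"
  have c: "c \<noteq> 0" using immersion_onD(3)[OF assms] by (simp add: c_def Yu_def Yv_def)
  have Y: "Y differentiable (at p)" by (rule cinf_on_differentiable[OF immersion_onD(2)[OF assms] assms(2)])
  have lower: "norm c * norm h \<le> (norm Yu + norm Yv) * norm (pd h Y p)" for h
  proof -
    have A: "pd h Y p = Re h *\<^sub>R Yu + Im h *\<^sub>R Yv" unfolding Yu_def Yv_def by (rule pd_Re_Im[OF Y])
    have "\<bar>Im h\<bar> * norm c \<le> norm Yu * norm (pd h Y p)"
      using norm_cross3_le[of Yu "pd h Y p"] by (simp add: A c_def cross_add_right cross_mult_right)
    moreover have "\<bar>Re h\<bar> * norm c \<le> norm (pd h Y p) * norm Yv"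
      using norm_cross3_le[of "pd h Y p" Yv] by (simp add: A c_def cross_add_left cross_mult_left)
    moreover have "norm c * norm h \<le> norm c * (\<bar>Re h\<bar> + \<bar>Im h\<bar>)"
      by (rule mult_left_mono[OF cmod_le]) simp
    ultimately show ?thesis by (simp add: algebra_simps)
  qed
  have "Yu \<noteq> 0" using c by (auto simp: c_def)
  then have "norm Yu + norm Yv > 0" by (simp add: add_pos_nonneg)
  then show ?thesis
    using c lower by (intro that[of "norm c / (norm Yu + norm Yv)"]) (auto simp: field_simps)
qed

lemma normal_component_le:
  fixes A :: "'a::real_normed_vector \<Rightarrow> 'b::real_inner"
  assumes "\<And>x. inner N (A x) = 0" "norm N = 1" "m > 0" "\<And>x. m * norm x \<le> norm (A x)"
    and "0 \<le> e" "e \<le> m / 2" "norm (\<Delta> - A \<delta>) \<le> e * norm \<delta>"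
  shows "\<bar>inner N \<Delta>\<bar> \<le> 2 * e / m * norm \<Delta>"
proof -
  have "\<bar>inner N \<Delta>\<bar> = \<bar>inner N (\<Delta> - A \<delta>)\<bar>" using assms(1) by (simp add: inner_diff_right)
  also have "\<dots> \<le> norm (\<Delta> - A \<delta>)" using Cauchy_Schwarz_ineq2[of N "\<Delta> - A \<delta>"] assms(2) by simp
  also have "\<dots> \<le> e * norm \<delta>" by (rule assms(7))
  also have "\<dots> \<le> 2 * e / m * norm \<Delta>"
  proof -
    have "m * norm \<delta> \<le> norm \<Delta> + norm (\<Delta> - A \<delta>)"
      using assms(4)[of \<delta>] norm_triangle_sub[of "A \<delta>" \<Delta>] by (simp add: norm_minus_commute)
    then have "m / 2 * norm \<delta> \<le> norm \<Delta>" using assms(6,7) mult_right_mono[OF assms(6) norm_ge_zero[of \<delta>]]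
      by linarith
    then have "e * (m / 2 * norm \<delta>) \<le> e * norm \<Delta>" using assms(5) by (rule mult_left_mono)
    then show ?thesis using assms(3) by (simp add: field_simps)
  qed
  finally show ?thesis .
qed

lemma difference_quotient_tendsto:
  fixes \<gamma> :: "real \<Rightarrow> 'a::real_normed_vector"
  assumes "(\<gamma> has_vector_derivative g') (at t)"
  shows "((\<lambda>s. (1 / (s - t)) *\<^sub>R (\<gamma> s - \<gamma> t)) \<longlongrightarrow> g') (at t)"
proof -
  have "((\<lambda>s. norm (\<gamma> s - \<gamma> t - (s - t) *\<^sub>R g') / norm (s - t)) \<longlongrightarrow> 0) (at t)"
    using assms by (simp add: has_vector_derivative_def has_derivative_iff_norm)
  moreover have "norm (\<gamma> s - \<gamma> t - (s - t) *\<^sub>R g') / norm (s - t)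
      = norm ((1 / (s - t)) *\<^sub>R (\<gamma> s - \<gamma> t) - g')" if "s \<noteq> t" for s
  proof -
    have "(1 / (s - t)) *\<^sub>R (\<gamma> s - \<gamma> t) - g' = (1 / (s - t)) *\<^sub>R (\<gamma> s - \<gamma> t - (s - t) *\<^sub>R g')"
      using that by (simp add: scaleR_diff_right)
    then show ?thesis
      by (simp only: norm_scaleR real_norm_def abs_divide abs_one) (simp add: divide_inverse mult.commute)
  qed
  then have "eventually (\<lambda>s. norm (\<gamma> s - \<gamma> t - (s - t) *\<^sub>R g') / norm (s - t)
      = norm ((1 / (s - t)) *\<^sub>R (\<gamma> s - \<gamma> t) - g')) (at t)"
    unfolding eventually_at_filter by (intro always_eventually) simp
  ultimately have "((\<lambda>s. norm ((1 / (s - t)) *\<^sub>R (\<gamma> s - \<gamma> t) - g')) \<longlongrightarrow> 0) (at t)"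
    by (rule Lim_transform_eventually)
  then show ?thesis by (rule tendsto_norm_zero_cancel[THEN LIM_zero_cancel])
qed

text \<open>The lift \<open>\<beta>\<close> is only continuous, so the chain rule is not available; the lower bound
  on the differential of \<open>Y\<close> shows instead that chords of the curve are asymptotically tangent.\<close>

lemma tangent_perp_unit_normal:
  assumes S: "immersion_on V Y" and \<beta>: "isCont \<beta> t" "\<beta> t \<in> V"
    and on_S: "\<And>s. Y (\<beta> s) = \<gamma> s" and \<gamma>: "(\<gamma> has_vector_derivative g') (at t)"
  shows "inner (unit_normal Y (\<beta> t)) g' = 0"
proof -
  define p N where "p = \<beta> t" and "N = unit_normal Y p"
  obtain m where m: "m > 0" "\<And>h. m * norm h \<le> norm (pd h Y p)"
    using immersion_pd_lower_bound[OF S \<beta>(2)] by (auto simp: p_def)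
  have N: "norm N = 1" "\<And>h. inner N (pd h Y p) = 0"
    using unit_normal_unit[OF S \<beta>(2)] unit_normal_orthogonal_pd[OF S \<beta>(2)]
    by (auto simp: N_def p_def norm_eq_1)
  have Y: "(Y has_derivative (\<lambda>h. pd h Y p)) (at p)"
    unfolding p_def by (rule has_derivative_pd[OF cinf_on_differentiable[OF immersion_onD(2)[OF S \<beta>(2)] \<beta>(2)]])
  define q where "q s = (1 / (s - t)) *\<^sub>R (\<gamma> s - \<gamma> t)" for s
  have q: "(q \<longlongrightarrow> g') (at t)"
    unfolding q_def[abs_def] by (rule difference_quotient_tendsto[OF \<gamma>])
  have bound: "\<bar>inner N g'\<bar> \<le> 2 * e / m * norm g'" if e: "0 < e" "e \<le> m / 2" for e
  proof -
    obtain d where d: "d > 0" "\<And>y. norm (y - p) < d \<Longrightarrow> norm (Y y - Y p - pd (y - p) Y p) \<le> e * norm (y - p)"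
      using Y e(1) unfolding has_derivative_at_alt by blast
    have "eventually (\<lambda>s. dist (\<beta> s) p < d) (at t)"
      using \<beta>(1) d(1) unfolding isCont_def p_def by (rule tendstoD)
    then have "eventually (\<lambda>s. \<bar>inner N (q s)\<bar> \<le> 2 * e / m * norm (q s)) (at t)"
    proof (rule eventually_mono)
      fix s assume "dist (\<beta> s) p < d"
      then have "\<bar>inner N (\<gamma> s - \<gamma> t)\<bar> \<le> 2 * e / m * norm (\<gamma> s - \<gamma> t)"
        using d(2)[of "\<beta> s"] e m N
        by (intro normal_component_le[where A = "\<lambda>h. pd h Y p" and \<delta> = "\<beta> s - p"])
          (auto simp: on_S[symmetric] p_def dist_norm)
      then have "\<bar>1 / (s - t)\<bar> * \<bar>inner N (\<gamma> s - \<gamma> t)\<bar> \<le> \<bar>1 / (s - t)\<bar> * (2 * e / m * norm (\<gamma> s - \<gamma> t))"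
        by (rule mult_left_mono) simp
      then show "\<bar>inner N (q s)\<bar> \<le> 2 * e / m * norm (q s)"
        by (simp add: q_def abs_mult ac_simps)
    qed
    moreover have "((\<lambda>s. \<bar>inner N (q s)\<bar>) \<longlongrightarrow> \<bar>inner N g'\<bar>) (at t)"
      using q by (intro tendsto_intros)
    moreover have "((\<lambda>s. 2 * e / m * norm (q s)) \<longlongrightarrow> 2 * e / m * norm g') (at t)"
      using q by (intro tendsto_intros)
    ultimately show ?thesis by (intro tendsto_le[OF trivial_limit_at]) auto
  qed
  have "((\<lambda>e. 2 * e / m * norm g') \<longlongrightarrow> 0) (at_right 0)"
    using m(1) by (auto intro!: tendsto_eq_intros)
  moreover have "eventually (\<lambda>e. \<bar>inner N g'\<bar> \<le> 2 * e / m * norm g') (at_right 0)"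
    using m(1) bound unfolding eventually_at_right_field by (intro exI[of _ "m / 2"]) auto
  ultimately have "\<bar>inner N g'\<bar> \<le> 0"
    by (intro tendsto_le[OF trivial_limit_at_right_real]) auto
  then show ?thesis by (simp add: N_def p_def)
qed

lemma continuous_square_constant_imp_constant:
  fixes \<sigma> :: "real \<Rightarrow> real"
  assumes "continuous_on UNIV \<sigma>" "\<And>s. (\<sigma> s)\<^sup>2 = k"
  shows "\<sigma> s = \<sigma> 0"
proof (rule ccontr)
  assume ne: "\<sigma> s \<noteq> \<sigma> 0"
  then have opp: "\<sigma> s = - \<sigma> 0" using assms(2)[of s] assms(2)[of 0] by (metis power2_eq_iff)
  have "continuous_on (closed_segment 0 s) \<sigma>" using assms(1) continuous_on_subset by blast
  moreover have "0 \<in> closed_segment (\<sigma> 0) (\<sigma> s)" unfolding opp closed_segment_eq_real_ivl by auto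
  ultimately obtain x where "\<sigma> x = 0" using IVT'_closed_segment_real[of 0 \<sigma> 0 s] by auto
  then have "k = 0" using assms(2)[of x] by simp
  then show False using ne assms(2)[of s] assms(2)[of 0] by simp
qed

text \<open>The coefficient \<open>\<sigma>\<close> is constant because \<open>\<sigma>\<^sup>2 = 1 - c\<^sup>2\<close> and \<open>\<sigma>\<close> is continuous.\<close>

lemma support_normal_along_boundary:
  assumes conf: "conformal_immersion_on U X" and circ: "\<And>s. cis s \<in> U"
    and S: "immersion_on V Y" and \<beta>: "continuous_on UNIV \<beta>" "\<And>s. \<beta> s \<in> V"
    and on_S: "\<And>s. Y (\<beta> s) = X (cis s)"
    and angle: "\<And>s. inner (unit_normal X (cis s)) (unit_normal Y (\<beta> s)) = c"
  obtains \<sigma> where "c\<^sup>2 + \<sigma>\<^sup>2 = 1"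
    "\<And>s. unit_normal Y (\<beta> s) = c *\<^sub>R unit_normal X (cis s)
            + \<sigma> *\<^sub>R cross3 (unit_normal X (cis s)) (unit_tangent (\<lambda>s. X (cis s)) s)"
proof -
  note imm = conformal_immersion_onD(1)[OF conf circ]
  note F = conformal_boundary_frame[OF conf circ]
  define n T \<nu> NS where "n = (\<lambda>s. unit_normal X (cis s))" and "T = unit_tangent (\<lambda>s. X (cis s))"
    and "\<nu> = (\<lambda>s. cross3 (n s) (T s))" and "NS = (\<lambda>s. unit_normal Y (\<beta> s))"
  have n_unit: "inner (n s) (n s) = 1" and T_unit: "inner (T s) (T s) = 1" and nT: "inner (n s) (T s) = 0" for s
    using unit_normal_unit[OF imm circ] F(2,3) by (simp_all add: n_def T_def)
  have NS_T: "inner (NS s) (T s) = 0" for s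
  proof -
    have "isCont \<beta> s" using \<beta>(1) by (simp add: continuous_on_eq_continuous_at)
    then have "inner (NS s) (pd (\<i> * cis s) X (cis s)) = 0"
      unfolding NS_def
      by (rule tangent_perp_unit_normal[OF S _ \<beta>(2) on_S conformal_boundary_velocity(1)[OF conf circ]])
    then show ?thesis by (simp add: T_def F(1))
  qed
  define \<sigma> where "\<sigma> s = inner (NS s) (\<nu> s)" for s
  have NS: "NS s = c *\<^sub>R n s + \<sigma> s *\<^sub>R \<nu> s" for s
  proof -
    have "inner (NS s) (n s) = c" using angle[of s] by (simp add: NS_def n_def inner_commute)
    then show ?thesis
      using orthonormal_expansion_perp[OF n_unit[of s] T_unit[of s] nT[of s] NS_T[of s]]
      by (simp add: \<sigma>_def \<nu>_def)
  qed
  have \<sigma>_sq: "(\<sigma> s)\<^sup>2 = 1 - c\<^sup>2" for s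
  proof -
    have "inner (\<nu> s) (\<nu> s) = 1" "inner (n s) (\<nu> s) = 0"
      using unit_cross3_unit[OF n_unit T_unit nT] by (simp_all add: \<nu>_def dot_cross_self)
    then have "inner (NS s) (NS s) = c\<^sup>2 + (\<sigma> s)\<^sup>2"
      unfolding NS using n_unit[of s]
      by (simp add: inner_add_left inner_add_right inner_commute power2_eq_square)
    then show ?thesis using unit_normal_unit[OF S \<beta>(2)] by (simp add: NS_def)
  qed
  have "continuous_on (range \<beta>) (unit_normal Y)"
    using \<beta>(2) differentiable_unit_normal[OF S]
    by (auto intro!: continuous_at_imp_continuous_on differentiable_imp_continuous_within)
  then have "continuous_on UNIV NS"
    using continuous_on_compose[OF \<beta>(1)] by (simp add: NS_def o_def)
  moreover have "continuous_on UNIV \<nu>"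
    using F(4) unfolding \<nu>_def n_def T_def
    by (intro continuous_at_imp_continuous_on ballI differentiable_imp_continuous_within)
  ultimately have "continuous_on UNIV \<sigma>" unfolding \<sigma>_def[abs_def] by (rule continuous_on_inner)
  then have "\<sigma> s = \<sigma> 0" for s using \<sigma>_sq by (rule continuous_square_constant_imp_constant)
  then show ?thesis
    using that[of "\<sigma> 0"] NS \<sigma>_sq[of 0] by (simp add: NS_def n_def \<nu>_def T_def)
qed

section \<open>Holomorphic functions on the closed unit disc\<close>

lemma maximum_real_cball:
  fixes f :: "complex \<Rightarrow> complex"
  assumes "f holomorphic_on ball 0 1" "continuous_on (cball 0 1) f"
    and "\<And>z. z \<in> sphere 0 1 \<Longrightarrow> Re (f z) \<le> B" "\<xi> \<in> cball 0 1"
  shows "Re (f \<xi>) \<le> B"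
  by (rule maximum_real_frontier[of f "cball 0 1"]) (use assms in simp_all)

lemma holomorphic_on_cmult:
  "f holomorphic_on S \<Longrightarrow> (\<lambda>z. c * f z) holomorphic_on S"
  by (intro holomorphic_on_mult holomorphic_on_const)

lemma Im_pos_if_Im_pos_on_sphere:
  fixes f :: "complex \<Rightarrow> complex"
  assumes holo: "f holomorphic_on ball 0 1" and cont: "continuous_on (cball 0 1) f"
    and pos: "\<And>z. z \<in> sphere 0 1 \<Longrightarrow> Im (f z) > 0" and \<xi>: "\<xi> \<in> cball 0 1"
  shows "Im (f \<xi>) > 0"
proof -
  have cIm: "continuous_on (sphere 0 1) (\<lambda>z. Im (f z))"
    using continuous_on_subset[OF cont sphere_cball] by (intro continuous_intros)
  have ne: "sphere (0::complex) 1 \<noteq> {}" by (metis empty_iff mem_sphere_0 norm_one)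
  obtain z0 where z0: "z0 \<in> sphere 0 1" "\<And>z. z \<in> sphere 0 1 \<Longrightarrow> Im (f z0) \<le> Im (f z)"
    using continuous_attains_inf[OF compact_sphere ne cIm] by auto
  have "Re (\<i> * f \<xi>) \<le> - Im (f z0)"
    by (rule maximum_real_cball[OF holomorphic_on_cmult[OF holo] continuous_on_mult_left[OF cont] _ \<xi>])
      (use z0(2) in simp)
  then show ?thesis using pos[OF z0(1)] by simp
qed

lemma Im_eq_0_if_Im_eq_0_on_sphere:
  fixes f :: "complex \<Rightarrow> complex"
  assumes holo: "f holomorphic_on ball 0 1" and cont: "continuous_on (cball 0 1) f"
    and real: "\<And>z. z \<in> sphere 0 1 \<Longrightarrow> Im (f z) = 0" and \<xi>: "\<xi> \<in> cball 0 1"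
  shows "Im (f \<xi>) = 0"
proof -
  have "Re (c * f \<xi>) \<le> 0" if "c \<in> {\<i>, - \<i>}" for c
    by (rule maximum_real_cball[OF holomorphic_on_cmult[OF holo] continuous_on_mult_left[OF cont] _ \<xi>])
      (use real that in auto)
  from this[of \<i>] this[of "- \<i>"] show ?thesis by simp
qed

lemma holomorphic_real_valued_imp_constant:
  fixes f :: "complex \<Rightarrow> complex"
  assumes holo: "f holomorphic_on S" and S: "open S" "convex S"
    and real: "\<And>z. z \<in> S \<Longrightarrow> Im (f z) = 0" and "z \<in> S" "w \<in> S"
  shows "f z = f w"
proof -
  have "(f has_field_derivative 0) (at x within S)" if x: "x \<in> S" for x
  proof -
    obtain D where D: "(f has_field_derivative D) (at x)"
      using holo x holomorphic_on_open[OF S(1)] by blast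
    have "((\<lambda>y. Im (f y)) has_derivative (\<lambda>h. Im (D * h))) (at x)"
      using bounded_linear.has_derivative[OF bounded_linear_Im D[unfolded has_field_derivative_def]] by simp
    moreover have "((\<lambda>y. Im (f y)) has_derivative (\<lambda>h. 0)) (at x)"
      by (rule has_derivative_transform_within_open[OF has_derivative_const S(1) x]) (simp add: real)
    ultimately have "(\<lambda>h. Im (D * h)) = (\<lambda>h. 0)" by (rule has_derivative_unique)
    then have "Im (D * 1) = 0" "Im (D * \<i>) = 0" by meson+
    then have "D = 0" by (simp add: complex_eq_iff)
    then show ?thesis using D has_field_derivative_at_within by blast
  qed
  then have "\<exists>c. \<forall>x\<in>S. f x = c" by (rule has_field_derivative_zero_constant[OF S(2)])
  then show ?thesis using \<open>z \<in> S\<close> \<open>w \<in> S\<close> by metis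
qed

lemma Im_eq_pos_mult_on_sphere_imp_eq_0:
  fixes \<Psi> :: "complex \<Rightarrow> complex" and E :: "complex \<Rightarrow> real"
  assumes holo: "\<Psi> holomorphic_on ball 0 1" and cont: "continuous_on (cball 0 1) \<Psi>" and "\<Psi> 0 = 0"
    and E: "\<And>z. z \<in> sphere 0 1 \<Longrightarrow> E z > 0"
    and bdry: "\<And>z. z \<in> sphere 0 1 \<Longrightarrow> Im (\<Psi> z) = E z * \<tau>"
  shows "\<tau> = 0"
proof -
  have "\<not> \<tau> > 0"
  proof
    assume "\<tau> > 0"
    then have "Im (\<Psi> z) > 0" if "z \<in> sphere 0 1" for z
      using bdry[OF that] E[OF that] by simp
    then have "Im (\<Psi> 0) > 0" by (rule Im_pos_if_Im_pos_on_sphere[OF holo cont]) simp_all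
    then show False using \<open>\<Psi> 0 = 0\<close> by simp
  qed
  moreover have "\<not> \<tau> < 0"
  proof
    assume "\<tau> < 0"
    then have "Im (- 1 * \<Psi> z) > 0" if "z \<in> sphere 0 1" for z
      using bdry[OF that] E[OF that] by (simp add: mult_pos_neg)
    then have "Im (- 1 * \<Psi> 0) > 0"
      by (rule Im_pos_if_Im_pos_on_sphere[OF holomorphic_on_cmult[OF holo] continuous_on_mult_left[OF cont]])
        simp_all
    then show False using \<open>\<Psi> 0 = 0\<close> by simp
  qed
  ultimately show "\<tau> = 0" by simp
qed

lemma eq_0_on_cball_if_sq_mult_eq_0:
  fixes Q :: "complex \<Rightarrow> complex"
  assumes cont: "continuous_on (cball 0 1) Q" and zero: "\<And>z. z \<in> ball 0 1 \<Longrightarrow> z\<^sup>2 * Q z = 0"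
    and "z \<in> cball 0 1"
  shows "Q z = 0"
proof -
  have "Q 0 = 0"
  proof (rule tendsto_unique[OF at_neq_bot])
    show "(Q \<longlongrightarrow> Q 0) (at 0)"
      using continuous_on_interior[OF cont] by (simp add: isCont_def)
    have "eventually (\<lambda>x. Q x = 0) (at 0)"
      unfolding eventually_at using zero by (intro exI[of _ 1]) auto
    then show "(Q \<longlongrightarrow> 0) (at 0)" by (rule tendsto_eventually)
  qed
  then have "Q z = 0" if "z \<in> ball 0 1" for z using zero[OF that] by (cases "z = 0") auto
  then show ?thesis
    using continuous_constant_on_closure[of "ball 0 1" Q 0 z] cont \<open>z \<in> cball 0 1\<close> by simp
qed

lemma holomorphic_eq_0_if_Im_sq_mult_on_sphere:
  fixes Q :: "complex \<Rightarrow> complex" and E :: "complex \<Rightarrow> real"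
  assumes holo: "Q holomorphic_on U" and disc: "cball 0 1 \<subseteq> U"
    and E: "\<And>z. z \<in> sphere 0 1 \<Longrightarrow> E z > 0"
    and bdry: "\<And>z. z \<in> sphere 0 1 \<Longrightarrow> Im (z\<^sup>2 * Q z) = E z * \<tau>"
  shows "\<tau> = 0" and "\<And>z. z \<in> cball 0 1 \<Longrightarrow> Q z = 0"
proof -
  define \<Psi> where "\<Psi> z = z\<^sup>2 * Q z" for z
  have "ball 0 1 \<subseteq> U" using disc ball_subset_cball by blast
  then have "Q holomorphic_on ball 0 1" by (rule holomorphic_on_subset[OF holo])
  then have \<Psi>_holo: "\<Psi> holomorphic_on ball 0 1"
    unfolding \<Psi>_def[abs_def] by (intro holomorphic_on_mult holomorphic_on_power holomorphic_on_ident)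
  have Q_cont: "continuous_on (cball 0 1) Q"
    using holomorphic_on_imp_continuous_on[OF holomorphic_on_subset[OF holo disc]] .
  then have \<Psi>_cont: "continuous_on (cball 0 1) \<Psi>"
    unfolding \<Psi>_def[abs_def] by (intro continuous_on_mult continuous_on_power continuous_on_id)
  show "\<tau> = 0"
  proof (rule Im_eq_pos_mult_on_sphere_imp_eq_0[OF \<Psi>_holo \<Psi>_cont _ E])
    show "Im (\<Psi> z) = E z * \<tau>" if "z \<in> sphere 0 1" for z
      using bdry[OF that] by (simp add: \<Psi>_def)
  qed (simp add: \<Psi>_def)
  then have sphere: "Im (\<Psi> z) = 0" if "z \<in> sphere 0 1" for z
    using bdry[OF that] by (simp add: \<Psi>_def)
  have real: "Im (\<Psi> z) = 0" if "z \<in> ball 0 1" for z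
  proof -
    have z: "z \<in> cball 0 1" using that by simp
    show ?thesis by (rule Im_eq_0_if_Im_eq_0_on_sphere[OF \<Psi>_holo \<Psi>_cont _ z]) (rule sphere)
  qed
  have "\<Psi> z = \<Psi> 0" if "z \<in> ball 0 1" for z
    by (rule holomorphic_real_valued_imp_constant[OF \<Psi>_holo open_ball convex_ball real that]) simp_all
  then show "Q z = 0" if "z \<in> cball 0 1" for z
    using eq_0_on_cball_if_sq_mult_eq_0[OF Q_cont _ that] by (simp add: \<Psi>_def)
qed

theorem theorem3p2:
  fixes X Y :: "complex \<Rightarrow> real^3" and U V :: "complex set" and \<beta> :: "real \<Rightarrow> complex"
  assumes disc: "cball 0 1 \<subseteq> U"
    and confX: "conformal_immersion_on U X"
    and cmc: "\<exists>H. \<forall>z\<in>U. mean_curv X z = H"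
    and analytic: "real_analytic_on UNIV (\<lambda>t. X (cis t))"
    and S: "immersion_on V Y"
    and lift: "continuous_on UNIV \<beta>" "\<forall>t. \<beta> t \<in> V" "\<forall>t. \<beta> (t + 2 * pi) = \<beta> t"
    and onS: "\<forall>t. Y (\<beta> t) = X (cis t)"
    and angle: "\<exists>c. \<forall>t. inner (unit_normal X (cis t)) (unit_normal Y (\<beta> t)) = c"
  shows "((\<forall>z\<in>cball 0 1. umbilic X z) \<longleftrightarrow>
           (\<exists>c. \<forall>t. geodesic_torsion (\<lambda>t. X (cis t)) (\<lambda>t. unit_normal Y (\<beta> t)) t = c))
       \<and> ((\<forall>z\<in>cball 0 1. umbilic X z) \<longrightarrow>
           (\<forall>t. geodesic_torsion (\<lambda>t. X (cis t)) (\<lambda>t. unit_normal Y (\<beta> t)) t = 0))"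
proof -
  obtain H where H: "\<forall>z\<in>U. mean_curv X z = H" using cmc by blast
  obtain c where c: "\<And>t. inner (unit_normal X (cis t)) (unit_normal Y (\<beta> t)) = c" using angle by blast
  have circ: "cis s \<in> U" for s using disc by (auto simp: subset_iff)
  obtain \<sigma> where cs: "c\<^sup>2 + \<sigma>\<^sup>2 = 1" and NS:
    "(\<lambda>t. unit_normal Y (\<beta> t)) = (\<lambda>t. c *\<^sub>R unit_normal X (cis t)
        + \<sigma> *\<^sub>R cross3 (unit_normal X (cis t)) (unit_tangent (\<lambda>s. X (cis s)) t))"
    using support_normal_along_boundary[OF confX circ S lift(1) _ _ c] lift(2) onS by (metis ext)
  have torsion: "geodesic_torsion (\<lambda>t. X (cis t)) (\<lambda>t. unit_normal Y (\<beta> t)) t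
      = Im ((cis t)\<^sup>2 * hopf X (cis t)) / (2 * fE X (cis t))" for t
    unfolding NS by (rule geodesic_torsion_boundary_circle[OF confX circ cs])
  have umbilic_iff: "(\<forall>z\<in>cball 0 1. umbilic X z) \<longleftrightarrow> (\<forall>z\<in>cball 0 1. hopf X z = 0)"
    using hopf_eq_0_iff_umbilic[OF confX] disc by blast
  have "\<forall>z\<in>cball 0 1. hopf X z = 0"
    if "\<forall>t. geodesic_torsion (\<lambda>t. X (cis t)) (\<lambda>t. unit_normal Y (\<beta> t)) t = \<tau>" for \<tau>
  proof (intro ballI holomorphic_eq_0_if_Im_sq_mult_on_sphere(2)[OF hopf_holomorphic[OF confX H] disc])
    fix z :: complex assume "z \<in> sphere 0 1"
    then have "z \<noteq> 0" "norm z = 1" by auto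
    then have z: "cis (Arg z) = z" by (simp add: cis_Arg sgn_div_norm)
    show "0 < 2 * fE X z" using conformal_first_fundamental_form(3)[OF confX circ, of "Arg z"] z by simp
    show "Im (z\<^sup>2 * hopf X z) = 2 * fE X z * \<tau>"
      using that torsion[of "Arg z"] conformal_first_fundamental_form(3)[OF confX circ, of "Arg z"]
      by (simp add: z field_simps)
  qed
  moreover have "\<forall>t. geodesic_torsion (\<lambda>t. X (cis t)) (\<lambda>t. unit_normal Y (\<beta> t)) t = 0"
    if "\<forall>z\<in>cball 0 1. hopf X z = 0"
    using that torsion by simp
  ultimately show ?thesis unfolding umbilic_iff by blast
qed

end
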